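(* The unique solution of $\frac{d}{dt}s(t)=H(\pi)s(t)$, $s(0)\in\mathbb V$, is $s(t)=e^{H(\pi)t}s(0)$, and there exist $\delta_2>0$ and $D_4<\infty$ such that for all $s(0)\in\mathbb V$ and $t\ge0$, $\|s(t)\|_2\le D_4e^{-\delta_2t}\|s(0)\|_2$.
   Context: Fix integers $C\ge1$, $d\ge1$ and a real $\sigma>0$. $\mathbb V=\{v\in\mathbb R^{C+1}:v_0=0\}$ with Euclidean norm $\|\cdot\|_2$. $\pi\in\mathbb R^{C+1}$ is the unique vector with $1=\pi_0\ge\pi_1\ge\cdots\ge\pi_C\ge0$ satisfying $\sigma(\pi_{n-1}^d-\pi_n^d)=n(\pi_n-\pi_{n+1})$ for $1\le n\le C$, $\pi_{C+1}=0$. $H(\pi):\mathbb V\to\mathbb V$ is the linear map $(H(\pi)b)_0=0$, $(H(\pi)b)_n=\sigma d\,\pi_{n-1}^{d-1}b_{n-1}-(\sigma d\,\pi_n^{d-1}+n)b_n+nb_{n+1}$ for $1\le n\le C$ (with $b_{C+1}:=0$). *)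

theory Defs
  imports "HOL-Analysis.Analysis"
begin

text \<open>Vectors of R^(C+1) are represented as functions nat => real; only the
coordinates 0..C are meaningful. The space V consists of those vectors with
v 0 = 0 (and, as a normalisation, v n = 0 for n > C).\<close>

definition inV :: "nat \<Rightarrow> (nat \<Rightarrow> real) \<Rightarrow> bool" where
  "inV C v \<longleftrightarrow> v 0 = 0 \<and> (\<forall>n>C. v n = 0)"

definition norm2 :: "nat \<Rightarrow> (nat \<Rightarrow> real) \<Rightarrow> real" where
  "norm2 C v = sqrt (\<Sum>n\<le>C. (v n)^2)"

definition is_pi :: "nat \<Rightarrow> nat \<Rightarrow> real \<Rightarrow> (nat \<Rightarrow> real) \<Rightarrow> bool" where
  "is_pi C d \<sigma> \<pi> \<longleftrightarrow>
     \<pi> 0 = 1 \<and> (\<forall>n<C. \<pi> (Suc n) \<le> \<pi> n) \<and> \<pi> C \<ge> 0 \<and> \<pi> (C+1) = 0 \<and>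
     (\<forall>n\<in>{1..C}. \<sigma> * (\<pi> (n-1) ^ d - \<pi> n ^ d) = real n * (\<pi> n - \<pi> (n+1)))"

definition Hmap :: "nat \<Rightarrow> nat \<Rightarrow> real \<Rightarrow> (nat \<Rightarrow> real) \<Rightarrow> (nat \<Rightarrow> real) \<Rightarrow> (nat \<Rightarrow> real)" where
  "Hmap C d \<sigma> \<pi> b = (\<lambda>n. if n = 0 \<or> n > C then 0 else
      \<sigma> * real d * \<pi> (n-1) ^ (d-1) * b (n-1)
      - (\<sigma> * real d * \<pi> n ^ (d-1) + real n) * b n
      + real n * (if n + 1 \<le> C then b (n+1) else 0))"

definition expH :: "((nat \<Rightarrow> real) \<Rightarrow> (nat \<Rightarrow> real)) \<Rightarrow> real \<Rightarrow> (nat \<Rightarrow> real) \<Rightarrow> (nat \<Rightarrow> real)" where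
  "expH H t v = (\<lambda>n. \<Sum>k. t ^ k / fact k * (H ^^ k) v n)"

definition is_solution :: "nat \<Rightarrow> ((nat \<Rightarrow> real) \<Rightarrow> (nat \<Rightarrow> real)) \<Rightarrow> (real \<Rightarrow> nat \<Rightarrow> real) \<Rightarrow> bool" where
  "is_solution C H s \<longleftrightarrow> (\<forall>t\<ge>0. inV C (s t) \<and>
      (\<forall>n\<le>C. ((\<lambda>\<tau>. s \<tau> n) has_real_derivative H (s t) n) (at t within {0..})))"

end

theory Submission imports Defs begin

text \<open>On the coordinates 1..C, H(\<pi>) is a finite matrix, so e^(H t) is an absolutely
convergent series solving the equation; uniqueness follows from a Gronwall estimate for the
squared distance of two solutions. For the decay, H(\<pi>) has nonnegative off-diagonal entries
and every column sum is at most -1: within a column the \<sigma> d \<pi>^(d-1) terms cancel and the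
n b_(n+1) terms leave -1. Hence G = H(\<pi>) + c I with c = \<sigma> d + C + 1 is entrywise nonnegative
with column sums at most c - 1, so e^(G t) grows in the l1 norm at most like e^((c-1) t), and
e^(H t) = e^(-c t) e^(G t) contracts the l1 norm by e^(-t). Comparing l1 and l2 norms on
R^(C+1) gives \<delta>2 = 1 and D4 = sqrt (C + 1).\<close>

definition mat_op :: "nat \<Rightarrow> (nat \<Rightarrow> nat \<Rightarrow> real) \<Rightarrow> (nat \<Rightarrow> real) \<Rightarrow> nat \<Rightarrow> real" where
  "mat_op C f x = (\<lambda>n. if n = 0 \<or> n > C then 0 else \<Sum>m\<le>C. f n m * x m)"

definition norm1 :: "nat \<Rightarrow> (nat \<Rightarrow> real) \<Rightarrow> real" where
  "norm1 C x = (\<Sum>n\<le>C. \<bar>x n\<bar>)"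

definition mat_abs_sum :: "nat \<Rightarrow> (nat \<Rightarrow> nat \<Rightarrow> real) \<Rightarrow> real" where
  "mat_abs_sum C f = (\<Sum>n\<le>C. \<Sum>m\<le>C. \<bar>f n m\<bar>)"

lemma funpow_mat_op_outside:
  "k \<ge> 1 \<Longrightarrow> n = 0 \<or> n > C \<Longrightarrow> (mat_op C f ^^ k) x n = 0"
  by (cases k) (auto simp: mat_op_def)

lemma mat_op_diff: "mat_op C f x n - mat_op C f y n = mat_op C f (\<lambda>m. x m - y m) n"
  by (simp add: mat_op_def sum_subtractf right_diff_distrib)

lemma norm1_nonneg: "norm1 C x \<ge> 0"
  unfolding norm1_def by (simp add: sum_nonneg)

lemma abs_le_norm1: "n \<le> C \<Longrightarrow> \<bar>x n\<bar> \<le> norm1 C x"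
  unfolding norm1_def by (rule member_le_sum) auto

lemma mat_abs_sum_nonneg: "mat_abs_sum C f \<ge> 0"
  unfolding mat_abs_sum_def by (simp add: sum_nonneg)

lemma norm1_mat_op_le: "norm1 C (mat_op C f x) \<le> mat_abs_sum C f * norm1 C x"
proof -
  have "\<bar>mat_op C f x n\<bar> \<le> (\<Sum>m\<le>C. \<bar>f n m\<bar>) * norm1 C x" if "n \<le> C" for n
  proof -
    have "\<bar>mat_op C f x n\<bar> \<le> (\<Sum>m\<le>C. \<bar>f n m\<bar> * \<bar>x m\<bar>)"
      unfolding mat_op_def by (auto intro: order_trans[OF sum_abs] sum_nonneg simp: abs_mult)
    also have "\<dots> \<le> (\<Sum>m\<le>C. \<bar>f n m\<bar> * norm1 C x)"
      by (rule sum_mono) (simp add: abs_le_norm1 mult_left_mono)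
    finally show ?thesis by (simp add: sum_distrib_right)
  qed
  then have "norm1 C (mat_op C f x) \<le> (\<Sum>n\<le>C. (\<Sum>m\<le>C. \<bar>f n m\<bar>) * norm1 C x)"
    unfolding norm1_def by (intro sum_mono) auto
  then show ?thesis by (simp add: mat_abs_sum_def sum_distrib_right)
qed

lemma norm1_funpow_mat_op_le:
  "norm1 C ((mat_op C f ^^ k) x) \<le> mat_abs_sum C f ^ k * norm1 C x"
proof (induction k)
  case 0
  then show ?case by simp
next
  case (Suc k)
  have "norm1 C ((mat_op C f ^^ Suc k) x) \<le> mat_abs_sum C f * norm1 C ((mat_op C f ^^ k) x)"
    using norm1_mat_op_le by simp
  also have "\<dots> \<le> mat_abs_sum C f * (mat_abs_sum C f ^ k * norm1 C x)"
    by (rule mult_left_mono[OF Suc mat_abs_sum_nonneg])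
  finally show ?case by (simp add: mult.assoc)
qed

text \<open>The summand \<bar>x n\<bar> covers k = 0 at coordinates n > C, which norm1 does not see.\<close>

lemma abs_funpow_mat_op_bound:
  "\<bar>(mat_op C f ^^ k) x n\<bar> \<le> mat_abs_sum C f ^ k * norm1 C x + \<bar>x n\<bar>"
proof (cases "n \<le> C")
  case True
  then have "\<bar>(mat_op C f ^^ k) x n\<bar> \<le> mat_abs_sum C f ^ k * norm1 C x"
    using abs_le_norm1 norm1_funpow_mat_op_le order_trans by blast
  then show ?thesis by simp
next
  case False
  then show ?thesis
    using funpow_mat_op_outside[of k n C f x] norm1_nonneg[of C x] mat_abs_sum_nonneg[of C f]
    by (cases "k = 0") auto
qed

subsection \<open>The exponential series\<close>

lemma summable_expH_series: "summable (\<lambda>k. t ^ k / fact k * (mat_op C f ^^ k) x n)"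
proof -
  let ?A = "mat_abs_sum C f" and ?N = "norm1 C x"
  have major: "summable (\<lambda>k. ?N * (inverse (fact k) * (\<bar>t\<bar> * ?A) ^ k)
      + \<bar>x n\<bar> * (inverse (fact k) * \<bar>t\<bar> ^ k))"
    by (intro summable_add summable_mult summable_exp)
  have bound: "\<bar>t ^ k / fact k * (mat_op C f ^^ k) x n\<bar>
      \<le> ?N * (inverse (fact k) * (\<bar>t\<bar> * ?A) ^ k) + \<bar>x n\<bar> * (inverse (fact k) * \<bar>t\<bar> ^ k)" for k
  proof -
    have "\<bar>t ^ k / fact k * (mat_op C f ^^ k) x n\<bar>
        = \<bar>(mat_op C f ^^ k) x n\<bar> * (inverse (fact k) * \<bar>t\<bar> ^ k)"
      by (simp add: abs_mult power_abs field_simps)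
    also have "\<dots> \<le> (?A ^ k * ?N + \<bar>x n\<bar>) * (inverse (fact k) * \<bar>t\<bar> ^ k)"
      by (rule mult_right_mono[OF abs_funpow_mat_op_bound]) simp
    finally show ?thesis by (simp add: power_mult_distrib algebra_simps)
  qed
  have "summable (\<lambda>k. \<bar>t ^ k / fact k * (mat_op C f ^^ k) x n\<bar>)"
    by (rule summable_rabs_comparison_test[OF _ major]) (use bound in auto)
  then show ?thesis by (rule summable_rabs_cancel)
qed

lemma expH_0: "expH F 0 x = x"
proof
  fix n
  have "(\<lambda>k. (0::real) ^ k / fact k * (F ^^ k) x n) = (\<lambda>k. if k = 0 then (F ^^ k) x n else 0)"
    by auto
  then show "expH F 0 x n = x n"
    unfolding expH_def using sums_single[of 0 "\<lambda>k. (F ^^ k) x n"] sums_unique by fastforce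
qed

lemma expH_inV:
  assumes "inV C x" shows "inV C (expH (mat_op C f) t x)"
proof -
  have "(mat_op C f ^^ k) x n = 0" if "n = 0 \<or> n > C" for k n
    using that assms funpow_mat_op_outside[of k n C f x] by (cases k) (auto simp: inV_def)
  then show ?thesis by (simp add: inV_def expH_def)
qed

lemma mat_op_expH:
  "(\<Sum>k. t ^ k / fact k * mat_op C f ((mat_op C f ^^ k) x) n) = mat_op C f (expH (mat_op C f) t x) n"
proof (cases "n = 0 \<or> n > C")
  case True
  then show ?thesis by (simp add: mat_op_def)
next
  case False
  let ?e = "\<lambda>k m. t ^ k / fact k * (mat_op C f ^^ k) x m"
  have "(\<Sum>k. t ^ k / fact k * mat_op C f ((mat_op C f ^^ k) x) n) = (\<Sum>k. \<Sum>m\<le>C. f n m * ?e k m)"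
    using False by (simp add: mat_op_def sum_distrib_left algebra_simps)
  also have "\<dots> = (\<Sum>m\<le>C. \<Sum>k. f n m * ?e k m)"
    by (rule suminf_sum) (intro summable_mult summable_expH_series)
  also have "\<dots> = (\<Sum>m\<le>C. f n m * (\<Sum>k. ?e k m))"
    by (intro sum.cong refl suminf_mult summable_expH_series)
  finally show ?thesis
    using False by (simp add: mat_op_def expH_def)
qed

lemma expH_has_real_derivative:
  "((\<lambda>t. expH (mat_op C f) t x n) has_real_derivative mat_op C f (expH (mat_op C f) t x) n) (at t)"
proof -
  let ?c = "\<lambda>k. (mat_op C f ^^ k) x n / fact k"
  have series: "(\<lambda>t. expH (mat_op C f) t x n) = (\<lambda>t. \<Sum>k. ?c k * t ^ k)"
    by (simp add: expH_def field_simps)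
  have deriv: "((\<lambda>t. \<Sum>k. ?c k * t ^ k) has_real_derivative (\<Sum>k. diffs ?c k * t ^ k)) (at t)"
    by (rule termdiffs_strong_converges_everywhere)
      (use summable_expH_series in \<open>auto simp: field_simps\<close>)
  have diffs: "(\<lambda>k. diffs ?c k * t ^ k) = (\<lambda>k. t ^ k / fact k * mat_op C f ((mat_op C f ^^ k) x) n)"
  proof
    fix k
    have "diffs ?c k = real (Suc k) * mat_op C f ((mat_op C f ^^ k) x) n / (real (Suc k) * fact k)"
      by (simp add: diffs_def del: of_nat_Suc)
    then show "diffs ?c k * t ^ k = t ^ k / fact k * mat_op C f ((mat_op C f ^^ k) x) n" by simp
  qed
  show ?thesis
    using deriv unfolding series diffs mat_op_expH .
qed

lemma expH_is_solution: "inV C x \<Longrightarrow> is_solution C (mat_op C f) (\<lambda>t. expH (mat_op C f) t x)"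
  unfolding is_solution_def
  using expH_inV has_field_derivative_at_within[OF expH_has_real_derivative] by blast

subsection \<open>Uniqueness of solutions\<close>

lemma nonpos_if_deriv_le_linear:
  fixes E DE :: "real \<Rightarrow> real"
  assumes deriv: "\<And>\<tau>. \<tau> \<ge> 0 \<Longrightarrow> (E has_real_derivative DE \<tau>) (at \<tau> within {0..})"
    and bound: "\<And>\<tau>. DE \<tau> \<le> L * E \<tau>"
    and E0: "E 0 \<le> 0" and t: "t \<ge> 0"
  shows "E t \<le> 0"
proof -
  define P where "P = (\<lambda>\<tau>. E \<tau> * exp (- L * \<tau>))"
  define DP where "DP = (\<lambda>\<tau>. (DE \<tau> - L * E \<tau>) * exp (- L * \<tau>))"
  have P': "(P has_real_derivative DP y) (at y within {0..})" if "y \<ge> 0" for y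
    unfolding P_def DP_def
    by (rule derivative_eq_intros deriv[OF that] refl)+ (simp add: algebra_simps)
  have "(P has_derivative (\<lambda>h. DP y * h)) (at y within {0..t})" if "0 \<le> y" "y \<le> t" for y
    by (rule has_derivative_subset[OF P'[OF that(1), unfolded has_field_derivative_def]]) auto
  then obtain y where "P t - P 0 = DP y * (t - 0)"
    using mvt_very_simple[of 0 t P "\<lambda>y h. DP y * h"] t by blast
  moreover have "DP y * t \<le> 0"
    using bound[of y] t by (simp add: DP_def mult_nonpos_nonneg)
  ultimately have "P t \<le> 0"
    using E0 by (simp add: P_def)
  then show ?thesis
    by (simp add: P_def mult_le_0_iff)
qed

lemma sum_mult_mat_op_le:
  "(\<Sum>n\<le>C. w n * mat_op C f w n) \<le> mat_abs_sum C f * (\<Sum>n\<le>C. (w n)\<^sup>2)"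
proof -
  let ?E = "\<Sum>n\<le>C. (w n)\<^sup>2"
  have sq: "(w n)\<^sup>2 \<le> ?E" if "n \<le> C" for n
    by (rule member_le_sum) (use that in auto)
  have prod: "\<bar>w n * w m\<bar> \<le> ?E" if "n \<le> C" "m \<le> C" for n m
  proof -
    have "2 * \<bar>w n * w m\<bar> \<le> (w n)\<^sup>2 + (w m)\<^sup>2"
      using sum_squares_bound[of "\<bar>w n\<bar>" "\<bar>w m\<bar>"] by (simp add: abs_mult power2_eq_square)
    then show ?thesis using sq[OF that(1)] sq[OF that(2)] by linarith
  qed
  have "w n * mat_op C f w n \<le> (\<Sum>m\<le>C. \<bar>f n m\<bar> * ?E)" if "n \<le> C" for n
  proof -
    have "w n * mat_op C f w n \<le> (\<Sum>m\<le>C. \<bar>f n m * (w n * w m)\<bar>)"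
      by (auto simp: mat_op_def sum_distrib_left algebra_simps intro: order_trans[OF _ sum_abs])
    also have "\<dots> \<le> (\<Sum>m\<le>C. \<bar>f n m\<bar> * ?E)"
      by (rule sum_mono) (use that prod in \<open>auto simp: abs_mult intro: mult_left_mono\<close>)
    finally show ?thesis .
  qed
  then have "(\<Sum>n\<le>C. w n * mat_op C f w n) \<le> (\<Sum>n\<le>C. \<Sum>m\<le>C. \<bar>f n m\<bar> * ?E)"
    by (intro sum_mono) auto
  then show ?thesis
    by (simp add: mat_abs_sum_def sum_distrib_right)
qed

lemma is_solution_unique:
  assumes s1: "is_solution C (mat_op C f) s1" and s2: "is_solution C (mat_op C f) s2"
    and same_start: "s1 0 = s2 0" and t: "t \<ge> 0"
  shows "s1 t = s2 t"
proof -
  define w where "w = (\<lambda>\<tau> n. s1 \<tau> n - s2 \<tau> n)"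
  define E where "E = (\<lambda>\<tau>. \<Sum>n\<le>C. (w \<tau> n)\<^sup>2)"
  have "(E has_real_derivative 2 * (\<Sum>n\<le>C. w \<tau> n * mat_op C f (w \<tau>) n)) (at \<tau> within {0..})"
    if "\<tau> \<ge> 0" for \<tau>
  proof -
    have "(E has_real_derivative (\<Sum>n\<le>C. 2 * w \<tau> n * (mat_op C f (s1 \<tau>) n - mat_op C f (s2 \<tau>) n)))
        (at \<tau> within {0..})"
      unfolding E_def w_def
      by (rule DERIV_sum, rule derivative_eq_intros, rule derivative_eq_intros)
        (use s1 s2 that in \<open>auto simp: is_solution_def\<close>)
    then show ?thesis
      by (simp add: mat_op_diff w_def sum_distrib_left algebra_simps)
  qed
  moreover have "2 * (\<Sum>n\<le>C. w \<tau> n * mat_op C f (w \<tau>) n) \<le> 2 * mat_abs_sum C f * E \<tau>" for \<tau>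
    using sum_mult_mat_op_le[where w = "w \<tau>"] by (simp add: E_def)
  moreover have "E 0 \<le> 0"
    by (simp add: E_def w_def same_start)
  ultimately have "E t \<le> 0"
    by (rule nonpos_if_deriv_le_linear[OF _ _ _ t])
  then have "E t = 0"
    using sum_nonneg[of "{..C}" "\<lambda>n. (w t n)\<^sup>2"] by (simp add: E_def)
  then have "\<forall>n\<in>{..C}. (w t n)\<^sup>2 = 0"
    unfolding E_def by (subst (asm) sum_nonneg_eq_0_iff) auto
  moreover have "inV C (s1 t)" "inV C (s2 t)"
    using s1 s2 t by (auto simp: is_solution_def)
  ultimately show ?thesis
    by (intro ext, case_tac "x \<le> C") (auto simp: w_def inV_def)
qed
subsection \<open>Nonnegative matrices with bounded column sums\<close>

locale nonneg_matrix =
  fixes C :: nat and g :: "nat \<Rightarrow> nat \<Rightarrow> real" and K :: real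
  assumes entry_nonneg: "\<And>n m. n \<le> C \<Longrightarrow> m \<le> C \<Longrightarrow> g n m \<ge> 0"
    and col_sum_le: "\<And>m. m \<le> C \<Longrightarrow> (\<Sum>n\<in>{1..C}. g n m) \<le> K"
    and bound_nonneg: "K \<ge> 0"
begin

lemma mat_op_nonneg: "(\<And>m. x m \<ge> 0) \<Longrightarrow> mat_op C g x n \<ge> 0"
  unfolding mat_op_def by (auto intro!: sum_nonneg mult_nonneg_nonneg entry_nonneg)

lemma mat_op_mono: "(\<And>m. x m \<le> y m) \<Longrightarrow> mat_op C g x n \<le> mat_op C g y n"
  unfolding mat_op_def by (auto intro!: sum_mono mult_left_mono entry_nonneg)

lemma abs_mat_op_le: "\<bar>mat_op C g x n\<bar> \<le> mat_op C g (\<lambda>m. \<bar>x m\<bar>) n"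
  unfolding mat_op_def
  by (auto intro!: order_trans[OF sum_abs] sum_mono simp: abs_mult entry_nonneg)

lemma abs_funpow_mat_op_le:
  "\<bar>(mat_op C g ^^ k) x n\<bar> \<le> (mat_op C g ^^ k) (\<lambda>m. \<bar>x m\<bar>) n"
proof (induction k arbitrary: n)
  case 0
  then show ?case by simp
next
  case (Suc k)
  have "\<bar>(mat_op C g ^^ Suc k) x n\<bar> \<le> mat_op C g (\<lambda>m. \<bar>(mat_op C g ^^ k) x m\<bar>) n"
    using abs_mat_op_le by simp
  also have "\<dots> \<le> (mat_op C g ^^ Suc k) (\<lambda>m. \<bar>x m\<bar>) n"
    using mat_op_mono[of "\<lambda>m. \<bar>(mat_op C g ^^ k) x m\<bar>"] Suc by simp
  finally show ?case .
qed

lemma funpow_mat_op_nonneg: "(\<And>m. x m \<ge> 0) \<Longrightarrow> (mat_op C g ^^ k) x n \<ge> 0"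
  by (induction k arbitrary: n) (auto intro: mat_op_nonneg)

lemma norm1_mat_op_nonneg_le:
  assumes "\<And>m. x m \<ge> 0" shows "norm1 C (mat_op C g x) \<le> K * norm1 C x"
proof -
  have "norm1 C (mat_op C g x) = (\<Sum>n\<in>insert 0 {1..C}. mat_op C g x n)"
    unfolding norm1_def using mat_op_nonneg[OF assms]
    by (intro sum.cong) (auto simp: not_less_eq_eq)
  also have "\<dots> = (\<Sum>n\<in>{1..C}. \<Sum>m\<le>C. g n m * x m)"
    by (simp add: mat_op_def)
  also have "\<dots> = (\<Sum>m\<le>C. (\<Sum>n\<in>{1..C}. g n m) * x m)"
    by (subst sum.swap) (simp add: sum_distrib_right)
  also have "\<dots> \<le> (\<Sum>m\<le>C. K * x m)"
    by (rule sum_mono) (use col_sum_le assms in \<open>auto intro: mult_right_mono\<close>)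
  also have "\<dots> = K * norm1 C x"
    using assms by (simp add: norm1_def sum_distrib_left)
  finally show ?thesis .
qed

lemma norm1_funpow_mat_op_abs_le:
  "norm1 C ((mat_op C g ^^ k) (\<lambda>m. \<bar>x m\<bar>)) \<le> K ^ k * norm1 C x"
proof (induction k)
  case 0
  then show ?case by (simp add: norm1_def)
next
  case (Suc k)
  have "norm1 C ((mat_op C g ^^ Suc k) (\<lambda>m. \<bar>x m\<bar>)) \<le> K * norm1 C ((mat_op C g ^^ k) (\<lambda>m. \<bar>x m\<bar>))"
    using norm1_mat_op_nonneg_le funpow_mat_op_nonneg by simp
  also have "\<dots> \<le> K * (K ^ k * norm1 C x)"
    by (rule mult_left_mono[OF Suc bound_nonneg])
  finally show ?case by (simp add: mult.assoc)
qed

lemma norm1_expH_le: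
  assumes t: "t \<ge> 0" shows "norm1 C (expH (mat_op C g) t x) \<le> exp (K * t) * norm1 C x"
proof -
  let ?G = "mat_op C g" and ?ax = "\<lambda>m. \<bar>x m\<bar>"
  let ?e = "\<lambda>k n. t ^ k / fact k * (?G ^^ k) ?ax n"
  have "norm1 C (expH ?G t x) \<le> (\<Sum>n\<le>C. \<Sum>k. ?e k n)"
    unfolding norm1_def expH_def
  proof (rule sum_mono)
    fix n
    have le: "\<bar>t ^ k / fact k * (?G ^^ k) x n\<bar> \<le> ?e k n" for k
    proof -
      have "\<bar>t ^ k / fact k * (?G ^^ k) x n\<bar> = t ^ k / fact k * \<bar>(?G ^^ k) x n\<bar>"
        using t by (simp add: abs_mult)
      also have "\<dots> \<le> ?e k n"
        by (rule mult_left_mono[OF abs_funpow_mat_op_le]) (use t in simp)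
      finally show ?thesis .
    qed
    have abs_summable: "summable (\<lambda>k. \<bar>t ^ k / fact k * (?G ^^ k) x n\<bar>)"
      by (rule summable_rabs_comparison_test[OF _ summable_expH_series]) (use le in auto)
    show "\<bar>\<Sum>k. t ^ k / fact k * (?G ^^ k) x n\<bar> \<le> (\<Sum>k. ?e k n)"
      by (rule order_trans[OF summable_rabs[OF abs_summable]
            suminf_le[OF le abs_summable summable_expH_series]])
  qed
  also have "\<dots> = (\<Sum>k. \<Sum>n\<le>C. ?e k n)"
    by (rule suminf_sum[symmetric]) (rule summable_expH_series)
  also have "\<dots> = (\<Sum>k. t ^ k / fact k * norm1 C ((?G ^^ k) ?ax))"
    unfolding norm1_def by (simp add: funpow_mat_op_nonneg sum_distrib_left)
  also have "\<dots> \<le> (\<Sum>k. norm1 C x * (inverse (fact k) * (K * t) ^ k))"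
  proof (rule suminf_le)
    show "summable (\<lambda>k. norm1 C x * (inverse (fact k) * (K * t) ^ k))"
      by (intro summable_mult summable_exp)
    show "summable (\<lambda>k. t ^ k / fact k * norm1 C ((?G ^^ k) ?ax))"
      using summable_sum[of "{..C}" "\<lambda>n k. ?e k n", OF summable_expH_series]
      unfolding norm1_def by (simp add: funpow_mat_op_nonneg sum_distrib_left)
    fix k
    have "t ^ k / fact k * norm1 C ((?G ^^ k) ?ax) \<le> t ^ k / fact k * (K ^ k * norm1 C x)"
      by (rule mult_left_mono[OF norm1_funpow_mat_op_abs_le]) (use t in simp)
    then show "t ^ k / fact k * norm1 C ((?G ^^ k) ?ax) \<le> norm1 C x * (inverse (fact k) * (K * t) ^ k)"
      by (simp add: power_mult_distrib field_simps)
  qed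
  also have "\<dots> = norm1 C x * exp (K * t)"
  proof -
    have "(\<lambda>k. inverse (fact k) * (K * t) ^ k) sums exp (K * t)"
      using exp_converges[of "K * t"] by (simp add: field_simps)
    then show ?thesis by (simp add: sums_unique[symmetric] sums_summable[THEN suminf_mult])
  qed
  finally show ?thesis by (simp add: mult.commute)
qed

end

definition shift_diag :: "(nat \<Rightarrow> nat \<Rightarrow> real) \<Rightarrow> real \<Rightarrow> nat \<Rightarrow> nat \<Rightarrow> real" where
  "shift_diag f c n m = f n m + (if m = n then c else 0)"

lemma mat_op_shift_diag:
  "1 \<le> n \<Longrightarrow> n \<le> C \<Longrightarrow> mat_op C (shift_diag f c) x n = mat_op C f x n + c * x n"
  by (simp add: mat_op_def shift_diag_def distrib_right sum.distrib
      if_distrib[of "\<lambda>a. a * _"] cong: if_cong)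

lemma expH_shift_diag:
  assumes x: "inV C x" and t: "t \<ge> 0"
  shows "expH (mat_op C f) t x = (\<lambda>n. exp (- c * t) * expH (mat_op C (shift_diag f c)) t x n)"
proof -
  let ?E = "\<lambda>\<tau>. expH (mat_op C (shift_diag f c)) \<tau> x"
  have "is_solution C (mat_op C f) (\<lambda>\<tau> n. exp (- c * \<tau>) * ?E \<tau> n)"
    unfolding is_solution_def
  proof (intro allI impI conjI)
    fix \<tau> :: real
    have "inV C (?E \<tau>)" by (rule expH_inV[OF x])
    then show "inV C (\<lambda>n. exp (- c * \<tau>) * ?E \<tau> n)" by (simp add: inV_def)
    fix n assume n: "n \<le> C"
    have "((\<lambda>\<tau>. exp (- c * \<tau>) * ?E \<tau> n) has_real_derivative
        exp (- c * \<tau>) * (- c) * ?E \<tau> n + exp (- c * \<tau>) * mat_op C (shift_diag f c) (?E \<tau>) n) (at \<tau>)"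
      by (rule derivative_eq_intros expH_has_real_derivative refl)+ simp
    moreover have "exp (- c * \<tau>) * (- c) * ?E \<tau> n + exp (- c * \<tau>) * mat_op C (shift_diag f c) (?E \<tau>) n
        = mat_op C f (\<lambda>n. exp (- c * \<tau>) * ?E \<tau> n) n"
      using \<open>inV C (?E \<tau>)\<close> n mat_op_shift_diag[of n C f c "?E \<tau>"]
      by (cases "n = 0") (auto simp: mat_op_def inV_def sum_distrib_left algebra_simps)
    ultimately show "((\<lambda>\<tau>. exp (- c * \<tau>) * ?E \<tau> n) has_real_derivative
        mat_op C f (\<lambda>n. exp (- c * \<tau>) * ?E \<tau> n) n) (at \<tau> within {0..})"
      by (simp add: has_field_derivative_at_within)
  qed
  from is_solution_unique[OF expH_is_solution[OF x] this _ t] show ?thesis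
    by (simp add: expH_0)
qed

definition Hmat :: "nat \<Rightarrow> real \<Rightarrow> (nat \<Rightarrow> real) \<Rightarrow> nat \<Rightarrow> nat \<Rightarrow> real" where
  "Hmat d \<sigma> \<pi> n m = (if m + 1 = n then \<sigma> * real d * \<pi> m ^ (d - 1) else 0)
     + (if m = n then - (\<sigma> * real d * \<pi> n ^ (d - 1) + real n) else 0)
     + (if m = n + 1 then real n else 0)"

lemma Hmap_eq_mat_op: "Hmap C d \<sigma> \<pi> = mat_op C (Hmat d \<sigma> \<pi>)"
proof (intro ext)
  fix b n
  show "Hmap C d \<sigma> \<pi> b n = mat_op C (Hmat d \<sigma> \<pi>) b n"
  proof (cases "n = 0 \<or> n > C")
    case True
    then show ?thesis by (simp add: Hmap_def mat_op_def)
  next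
    case False
    have "(\<Sum>m\<le>C. Hmat d \<sigma> \<pi> n m * b m) =
        (\<Sum>m\<le>C. if m = n - 1 then \<sigma> * real d * \<pi> m ^ (d - 1) * b m else 0)
      + (\<Sum>m\<le>C. if m = n then - (\<sigma> * real d * \<pi> n ^ (d - 1) + real n) * b m else 0)
      + (\<Sum>m\<le>C. if m = n + 1 then real n * b m else 0)"
      unfolding Hmat_def sum.distrib[symmetric] using False by (intro sum.cong) auto
    also have "\<dots> = Hmap C d \<sigma> \<pi> b n"
      using False by (auto simp: Hmap_def algebra_simps)
    finally show ?thesis
      using False by (simp add: mat_op_def)
  qed
qed

lemma is_pi_antimono:
  assumes "is_pi C d \<sigma> \<pi>" "n \<le> m" "m \<le> C"
  shows "\<pi> m \<le> \<pi> n"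
  using assms(2,3)
proof (induction m)
  case (Suc m)
  show ?case
  proof (cases "n = Suc m")
    case False
    then have "\<pi> m \<le> \<pi> n"
      using Suc by simp
    moreover have "\<pi> (Suc m) \<le> \<pi> m"
      using assms(1) Suc.prems by (simp add: is_pi_def)
    ultimately show ?thesis by linarith
  qed simp
qed simp

lemma is_pi_bounds:
  assumes "is_pi C d \<sigma> \<pi>" "n \<le> C"
  shows "0 \<le> \<pi> n" "\<pi> n \<le> 1"
  using is_pi_antimono[OF assms(1) assms(2) order_refl] is_pi_antimono[OF assms(1) _ assms(2), of 0]
    assms(1) by (auto simp: is_pi_def)

lemma nonneg_matrix_shift_Hmat:
  assumes pi: "is_pi C d \<sigma> \<pi>" and \<sigma>: "\<sigma> > 0"
  shows "nonneg_matrix C (shift_diag (Hmat d \<sigma> \<pi>) (\<sigma> * real d + real C + 1)) (\<sigma> * real d + real C)"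
proof
  let ?a = "\<lambda>m. \<sigma> * real d * \<pi> m ^ (d - 1)"
  let ?c = "\<sigma> * real d + real C + 1"
  have a: "0 \<le> ?a m" "?a m \<le> \<sigma> * real d" if "m \<le> C" for m
    using is_pi_bounds[OF pi that] \<sigma> mult_left_mono[of "\<pi> m ^ (d - 1)" 1 "\<sigma> * real d"]
    by (auto intro: power_le_one)
  show "0 \<le> \<sigma> * real d + real C"
    using \<sigma> by simp
  show "0 \<le> shift_diag (Hmat d \<sigma> \<pi>) ?c n m" if "n \<le> C" "m \<le> C" for n m
    using a[of m] a[of n] that by (auto simp: shift_diag_def Hmat_def)
  show "(\<Sum>n\<in>{1..C}. shift_diag (Hmat d \<sigma> \<pi>) ?c n m) \<le> \<sigma> * real d + real C"
    if m: "m \<le> C" for m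
  proof -
    have "(\<Sum>n\<in>{1..C}. shift_diag (Hmat d \<sigma> \<pi>) ?c n m)
        = (\<Sum>n\<in>{1..C}. if n = m + 1 then ?a m else 0)
        + (\<Sum>n\<in>{1..C}. if n = m then ?c - (?a m + real m) else 0)
        + (\<Sum>n\<in>{1..C}. if n = m - 1 then (if 1 \<le> m then real n else 0) else 0)"
      unfolding sum.distrib[symmetric] by (intro sum.cong) (auto simp: shift_diag_def Hmat_def)
    also have "\<dots> = (if m + 1 \<le> C then ?a m else 0) + (if 1 \<le> m then ?c - (?a m + real m) else 0)
        + (if 2 \<le> m then real m - 1 else 0)"
      using m by (auto simp: sum.delta of_nat_diff)
    also have "\<dots> \<le> \<sigma> * real d + real C"
      using a[OF m] m by auto
    finally show ?thesis .
  qed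
qed

lemma norm1_expH_Hmat_le:
  assumes pi: "is_pi C d \<sigma> \<pi>" and \<sigma>: "\<sigma> > 0" and x: "inV C x" and t: "t \<ge> 0"
  shows "norm1 C (expH (mat_op C (Hmat d \<sigma> \<pi>)) t x) \<le> exp (- t) * norm1 C x"
proof -
  let ?c = "\<sigma> * real d + real C + 1"
  let ?G = "mat_op C (shift_diag (Hmat d \<sigma> \<pi>) ?c)"
  interpret nonneg_matrix C "shift_diag (Hmat d \<sigma> \<pi>) ?c" "\<sigma> * real d + real C"
    by (rule nonneg_matrix_shift_Hmat[OF pi \<sigma>])
  have "norm1 C (expH (mat_op C (Hmat d \<sigma> \<pi>)) t x) = exp (- ?c * t) * norm1 C (expH ?G t x)"
    unfolding expH_shift_diag[OF x t, where f = "Hmat d \<sigma> \<pi>" and c = ?c]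
    by (simp add: norm1_def abs_mult sum_distrib_left)
  also have "\<dots> \<le> exp (- ?c * t) * (exp ((\<sigma> * real d + real C) * t) * norm1 C x)"
    by (rule mult_left_mono[OF norm1_expH_le[OF t]]) simp
  also have "\<dots> = exp (- ?c * t + (\<sigma> * real d + real C) * t) * norm1 C x"
    by (simp only: exp_add mult.assoc)
  also have "\<dots> = exp (- t) * norm1 C x"
    by (simp add: algebra_simps)
  finally show ?thesis .
qed

lemma norm2_le_norm1: "norm2 C v \<le> norm1 C v"
  using L2_set_le_sum_abs[of v "{..C}"] by (simp add: L2_set_def norm2_def norm1_def)

lemma norm1_le_norm2: "norm1 C v \<le> sqrt (real C + 1) * norm2 C v"
proof -
  have "(\<Sum>n\<le>C. \<bar>v n\<bar> * 1)\<^sup>2 \<le> (\<Sum>n\<le>C. \<bar>v n\<bar>\<^sup>2) * (\<Sum>n\<le>C. 1\<^sup>2)"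
    by (rule Cauchy_Schwarz_ineq_sum)
  then have "(norm1 C v)\<^sup>2 \<le> ((real C + 1) * (\<Sum>n\<le>C. (v n)\<^sup>2))"
    by (simp add: norm1_def algebra_simps)
  then have "sqrt ((norm1 C v)\<^sup>2) \<le> sqrt ((real C + 1) * (\<Sum>n\<le>C. (v n)\<^sup>2))"
    by (rule real_sqrt_le_mono)
  then show ?thesis
    using norm1_nonneg[of C v] by (simp add: norm2_def real_sqrt_mult)
qed

lemma norm2_expH_Hmat_le:
  assumes "is_pi C d \<sigma> \<pi>" and "\<sigma> > 0" and "inV C x" and "t \<ge> 0"
  shows "norm2 C (expH (mat_op C (Hmat d \<sigma> \<pi>)) t x) \<le> sqrt (real C + 1) * exp (- 1 * t) * norm2 C x"
proof -
  have "norm2 C (expH (mat_op C (Hmat d \<sigma> \<pi>)) t x) \<le> exp (- t) * norm1 C x"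
    using norm2_le_norm1 norm1_expH_Hmat_le[OF assms] by (rule order_trans)
  also have "\<dots> \<le> exp (- t) * (sqrt (real C + 1) * norm2 C x)"
    by (rule mult_left_mono[OF norm1_le_norm2]) simp
  finally show ?thesis by (simp add: mult_ac)
qed

theorem mainTheorem7:
  fixes C d :: nat and \<sigma> :: real and \<pi> :: "nat \<Rightarrow> real"
  assumes "C \<ge> 1" and "d \<ge> 1" and "\<sigma> > 0"
    and "is_pi C d \<sigma> \<pi>"
  shows "(\<forall>s0. inV C s0 \<longrightarrow>
            is_solution C (Hmap C d \<sigma> \<pi>) (\<lambda>t. expH (Hmap C d \<sigma> \<pi>) t s0) \<and>
            (\<forall>s. is_solution C (Hmap C d \<sigma> \<pi>) s \<and> s 0 = s0 \<longrightarrow>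
                 (\<forall>t\<ge>0. s t = expH (Hmap C d \<sigma> \<pi>) t s0)))
       \<and> (\<exists>\<delta>2 D4. \<delta>2 > 0 \<and>
            (\<forall>s0 t. inV C s0 \<and> t \<ge> 0 \<longrightarrow>
               norm2 C (expH (Hmap C d \<sigma> \<pi>) t s0) \<le> D4 * exp (-\<delta>2 * t) * norm2 C s0))"
proof -
  let ?H = "mat_op C (Hmat d \<sigma> \<pi>)"
  show ?thesis
    unfolding Hmap_eq_mat_op
  proof (intro conjI allI impI)
    fix s0 assume s0: "inV C s0"
    show "is_solution C ?H (\<lambda>t. expH ?H t s0)"
      by (rule expH_is_solution[OF s0])
    fix s t assume "is_solution C ?H s \<and> s 0 = s0" and "(t::real) \<ge> 0"
    then show "s t = expH ?H t s0"
      using is_solution_unique[OF _ expH_is_solution[OF s0]] by (simp add: expH_0)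
  next
    show "\<exists>\<delta>2 D4. \<delta>2 > 0 \<and> (\<forall>s0 t. inV C s0 \<and> t \<ge> 0 \<longrightarrow>
        norm2 C (expH ?H t s0) \<le> D4 * exp (- \<delta>2 * t) * norm2 C s0)"
      using norm2_expH_Hmat_le[OF assms(4,3)]
      by (intro exI[of _ 1] exI[of _ "sqrt (real C + 1)"]) simp
  qed
qed

end
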